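(* Let $\kappa$ be a Mahlo cardinal, or more generally a strongly inaccessible cardinal such that $S^\kappa_{\mathrm{pr}}$ is stationary in $\kappa$. Then $\mathrm{add}(\mathbf{nst}^{\mathrm{pr}}_\kappa)\le\mathfrak d_\kappa$.
   Context: For a cardinal $\lambda$, $S^\lambda_{\mathrm{inc}}$ is the set of strongly inaccessible cardinals below $\lambda$. A set $S\subseteq\lambda$ is nowhere stationary if for every $\delta\le\lambda$ of uncountable cofinality, $S\cap\delta$ is nonstationary in $\delta$. By induction on strongly inaccessible $\lambda$ one defines a forcing $\mathbb Q_\lambda$ and an ideal $\mathrm{id}(\mathbb Q_\lambda)$ on $2^\lambda$: $p\in\mathbb Q_\lambda$ iff $p\subseteq 2^{<\lambda}$ is closed under initial segments and there is a witness $(\tau,S,\langle N_\delta:\delta\in S\rangle)$ with: (i) $\tau$ is the trunk of $p$, the least node of $p$ having two immediate successors in $p$; (ii) if $\tau\trianglelefteq\eta\in p$ then $\eta^\frown0,\eta^\frown1\in p$; (iii) $S\subseteq S^\lambda_{\mathrm{inc}}$ is nowhere stationary; (iv) $N_\delta\in\mathrm{id}(\mathbb Q_\delta)$ for $\delta\in S$; (v) for limit $\delta<\lambda$ with $\delta\notin S$ and $\eta\in2^\delta$: $\eta\in p$ iff $\eta\restriction\sigma\in p$ for all $\sigma<\delta$; (vi) for $\delta\in S$ and $\eta\in 2^\delta$: $\eta\in p$ iff $\eta\restriction\sigma\in p$ for all $\sigma<\delta$ and $\eta\notin N_\delta$. The order is $q\le p$ iff $q\subseteq p$. $[p]$ is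 the set of $x\in 2^\lambda$ all of whose proper initial segments lie in $p$; for $\mathcal J\subseteq\mathbb Q_\lambda$, $\mathrm{set}_0(\mathcal J)=2^\lambda\setminus\bigcup_{p\in\mathcal J}[p]$. $A\in\mathrm{id}(\mathbb Q_\lambda)$ iff there are at most $\lambda$ predense sets $\mathcal J_i\subseteq\mathbb Q_\lambda$ with $A\subseteq\bigcup_i\mathrm{set}_0(\mathcal J_i)$. $\Pr(\lambda)$ means: there is a family $\{\Lambda_i:i<\lambda\}$ of maximal antichains of $\mathbb Q_\lambda$ such that no $p\in\mathbb Q_\lambda$ satisfies $[p]\subseteq\bigcap_{i<\lambda}\bigcup_{q\in\Lambda_i}[q]$; $S^\kappa_{\mathrm{pr}}=\{\lambda\in S^\kappa_{\mathrm{inc}}:\Pr(\lambda)\}$. $\mathbf{nst}^{\mathrm{pr}}_\kappa$ is the family of nowhere stationary subsets of $S^\kappa_{\mathrm{pr}}$, ordered by $\subseteq^*$ (inclusion modulo a bounded subset of $\kappa$); $\mathrm{add}(\mathbf{nst}^{\mathrm{pr}}_\kappa)$ is the least size of a subfamily having no $\subseteq^*$-upper bound in $\mathbf{nst}^{\mathrm{pr}}_\kappa$. $\mathfrak d_\kappa$ is the least size of a family $D\subseteq\kappa^\kappa$ such that every $\eta\in\kappa^\kappa$ satisfies $\eta\le^*\nu$ for some $\nu\in D$, where $f\le^*g$ means $f(i)\le g(i)$ for all but boundedly many $i<\kappa$. *)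

theory Defs
  imports Main "HOL-Library.Countable_Set"
begin

text \<open>Ordinals up to kappa are modelled as elements of a well-ordered type 'k;
  an ordinal alpha is identified with the set of its predecessors.\<close>

type_synonym 'k bseq = "'k \<times> ('k \<Rightarrow> bool)"

definition is_limit :: "'k::wellorder \<Rightarrow> bool" where
  "is_limit \<delta> \<longleftrightarrow> (\<exists>\<beta>. \<beta> < \<delta>) \<and> (\<forall>\<beta><\<delta>. \<exists>\<gamma>. \<beta> < \<gamma> \<and> \<gamma> < \<delta>)"

definition unbounded_in :: "'k::wellorder \<Rightarrow> 'k set \<Rightarrow> bool" where
  "unbounded_in \<delta> A \<longleftrightarrow> (\<forall>\<beta><\<delta>. \<exists>a\<in>A. \<beta> \<le> a)"

definition club_in :: "'k::wellorder \<Rightarrow> 'k set \<Rightarrow> bool" where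
  "club_in \<delta> C \<longleftrightarrow> C \<subseteq> {x. x < \<delta>} \<and> unbounded_in \<delta> C \<and>
     (\<forall>\<gamma><\<delta>. is_limit \<gamma> \<and> unbounded_in \<gamma> (C \<inter> {x. x < \<gamma>}) \<longrightarrow> \<gamma> \<in> C)"

definition stationary_in :: "'k::wellorder \<Rightarrow> 'k set \<Rightarrow> bool" where
  "stationary_in \<delta> S \<longleftrightarrow> (\<forall>C. club_in \<delta> C \<longrightarrow> S \<inter> C \<noteq> {})"

definition uncountable_cof :: "'k::wellorder \<Rightarrow> bool" where
  "uncountable_cof \<delta> \<longleftrightarrow>
     (\<forall>A \<subseteq> {x. x < \<delta>}. countable A \<longrightarrow> (\<exists>\<beta><\<delta>. \<forall>a\<in>A. a < \<beta>))"

definition nowhere_stationary :: "'k::wellorder \<Rightarrow> 'k set \<Rightarrow> bool" where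
  "nowhere_stationary lam S \<longleftrightarrow> S \<subseteq> {x. x < lam} \<and>
     (\<forall>\<delta>\<le>lam. uncountable_cof \<delta> \<longrightarrow> \<not> stationary_in \<delta> (S \<inter> {x. x < \<delta>}))"

definition strongly_inaccessible :: "'k::wellorder \<Rightarrow> bool" where
  "strongly_inaccessible lam \<longleftrightarrow>
     \<not> countable {x. x < lam} \<and>
     (\<forall>\<alpha><lam. (card_of {x. x < \<alpha>}, card_of {x. x < lam}) \<in> ordLess) \<and>
     (\<forall>A \<subseteq> {x. x < lam}. unbounded_in lam A \<longrightarrow> (card_of A, card_of {x. x < lam}) \<in> ordIso) \<and>
     (\<forall>\<alpha><lam. (card_of (Pow {x. x < \<alpha>}), card_of {x. x < lam}) \<in> ordLess)"

definition S_inc :: "'k::wellorder \<Rightarrow> 'k set" where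
  "S_inc lam = {\<mu>. \<mu> < lam \<and> strongly_inaccessible \<mu>}"

text \<open>A sequence of length alpha is a pair (alpha, f) with f x = False for x \<ge> alpha.\<close>

definition seq_len :: "'k::wellorder \<Rightarrow> 'k bseq set" where
  "seq_len \<alpha> = {(\<beta>, f). \<beta> = \<alpha> \<and> (\<forall>x. \<alpha> \<le> x \<longrightarrow> \<not> f x)}"

definition seqs_below :: "'k::wellorder \<Rightarrow> 'k bseq set" where
  "seqs_below lam = (\<Union>\<alpha>\<in>{\<alpha>. \<alpha> < lam}. seq_len \<alpha>)"

definition restr :: "'k::wellorder bseq \<Rightarrow> 'k \<Rightarrow> 'k bseq" where
  "restr \<eta> \<beta> = (\<beta>, \<lambda>x. x < \<beta> \<and> snd \<eta> x)"

definition init_seg :: "'k::wellorder bseq \<Rightarrow> 'k bseq \<Rightarrow> bool" where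
  "init_seg \<eta> \<nu> \<longleftrightarrow> fst \<eta> \<le> fst \<nu> \<and> restr \<nu> (fst \<eta>) = \<eta>"

definition osucc :: "'k::wellorder \<Rightarrow> 'k" where
  "osucc \<alpha> = (LEAST x. \<alpha> < x)"

definition app :: "'k::wellorder bseq \<Rightarrow> bool \<Rightarrow> 'k bseq" where
  "app \<eta> i = (osucc (fst \<eta>), (snd \<eta>)(fst \<eta> := i))"

text \<open>One step of the inductive definition: given the ideals I delta for delta < lambda.
  Binary digits 0,1 are False,True.\<close>

definition Qstep :: "('k \<Rightarrow> 'k bseq set set) \<Rightarrow> 'k::wellorder \<Rightarrow> 'k bseq set set" where
  "Qstep I lam = {p. p \<subseteq> seqs_below lam \<and> (\<forall>\<eta>\<in>p. \<forall>\<nu>. init_seg \<nu> \<eta> \<longrightarrow> \<nu> \<in> p) \<and>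
     (\<exists>\<tau> S N.
        \<tau> \<in> p \<and> app \<tau> False \<in> p \<and> app \<tau> True \<in> p \<and>
        (\<forall>\<eta>\<in>p. app \<eta> False \<in> p \<and> app \<eta> True \<in> p \<longrightarrow> init_seg \<tau> \<eta>) \<and>
        (\<forall>\<eta>\<in>p. init_seg \<tau> \<eta> \<longrightarrow> app \<eta> False \<in> p \<and> app \<eta> True \<in> p) \<and>
        S \<subseteq> S_inc lam \<and> nowhere_stationary lam S \<and>
        (\<forall>\<delta>\<in>S. N \<delta> \<in> I \<delta>) \<and>
        (\<forall>\<delta><lam. is_limit \<delta> \<and> \<delta> \<notin> S \<longrightarrow>
            (\<forall>\<eta>\<in>seq_len \<delta>. \<eta> \<in> p \<longleftrightarrow> (\<forall>\<sigma><\<delta>. restr \<eta> \<sigma> \<in> p))) \<and>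
        (\<forall>\<delta>\<in>S. \<forall>\<eta>\<in>seq_len \<delta>. \<eta> \<in> p \<longleftrightarrow> (\<forall>\<sigma><\<delta>. restr \<eta> \<sigma> \<in> p) \<and> \<eta> \<notin> N \<delta>))}"

definition body :: "'k::wellorder bseq set \<Rightarrow> 'k \<Rightarrow> 'k bseq set" where
  "body p lam = {x \<in> seq_len lam. \<forall>\<sigma><lam. restr x \<sigma> \<in> p}"

definition compat :: "'a set set \<Rightarrow> 'a set \<Rightarrow> 'a set \<Rightarrow> bool" where
  "compat Q p q \<longleftrightarrow> (\<exists>r\<in>Q. r \<subseteq> p \<and> r \<subseteq> q)"

definition predense :: "'a set set \<Rightarrow> 'a set set \<Rightarrow> bool" where
  "predense Q J \<longleftrightarrow> J \<subseteq> Q \<and> (\<forall>p\<in>Q. \<exists>q\<in>J. compat Q p q)"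

definition set0 :: "'k::wellorder \<Rightarrow> 'k bseq set set \<Rightarrow> 'k bseq set" where
  "set0 lam J = seq_len lam - (\<Union>p\<in>J. body p lam)"

definition idstep :: "'k::wellorder bseq set set \<Rightarrow> 'k \<Rightarrow> 'k bseq set set" where
  "idstep Q lam = {A. A \<subseteq> seq_len lam \<and>
     (\<exists>I J. I \<subseteq> {i. i < lam} \<and> (\<forall>i\<in>I. predense Q (J i)) \<and> A \<subseteq> (\<Union>i\<in>I. set0 lam (J i)))}"

definition idQ :: "'k::wellorder \<Rightarrow> 'k bseq set set" where
  "idQ = wfrec {(x, y). x < y} (\<lambda>rec lam. idstep (Qstep rec lam) lam)"

definition QQ :: "'k::wellorder \<Rightarrow> 'k bseq set set" where
  "QQ lam = Qstep idQ lam"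

definition antichain :: "'a set set \<Rightarrow> 'a set set \<Rightarrow> bool" where
  "antichain Q A \<longleftrightarrow> A \<subseteq> Q \<and> (\<forall>p\<in>A. \<forall>q\<in>A. p \<noteq> q \<longrightarrow> \<not> compat Q p q)"

definition maximal_antichain :: "'a set set \<Rightarrow> 'a set set \<Rightarrow> bool" where
  "maximal_antichain Q A \<longleftrightarrow> antichain Q A \<and> (\<forall>p\<in>Q. \<exists>q\<in>A. compat Q p q)"

definition Pr :: "'k::wellorder \<Rightarrow> bool" where
  "Pr lam \<longleftrightarrow> (\<exists>\<Lambda>. (\<forall>i<lam. maximal_antichain (QQ lam) (\<Lambda> i)) \<and>
     \<not> (\<exists>p\<in>QQ lam. body p lam \<subseteq> (\<Inter>i\<in>{i. i < lam}. \<Union>q\<in>\<Lambda> i. body q lam)))"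

definition S_pr :: "'k::wellorder \<Rightarrow> 'k set" where
  "S_pr \<kappa> = {lam \<in> S_inc \<kappa>. Pr lam}"

definition nst_pr :: "'k::wellorder \<Rightarrow> 'k set set" where
  "nst_pr \<kappa> = {S. S \<subseteq> S_pr \<kappa> \<and> nowhere_stationary \<kappa> S}"

definition subset_star :: "'k::wellorder \<Rightarrow> 'k set \<Rightarrow> 'k set \<Rightarrow> bool" where
  "subset_star \<kappa> A B \<longleftrightarrow> (\<exists>\<beta><\<kappa>. \<forall>x\<in>A - B. x < \<beta>)"

text \<open>A subfamily of nst^pr_kappa with no subset_star-upper bound in nst^pr_kappa;
  add(nst^pr_kappa) is the least cardinality of such a family.\<close>
definition unbounded_family :: "'k::wellorder \<Rightarrow> 'k set set \<Rightarrow> bool" where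
  "unbounded_family \<kappa> F \<longleftrightarrow> F \<subseteq> nst_pr \<kappa> \<and> \<not> (\<exists>B\<in>nst_pr \<kappa>. \<forall>A\<in>F. subset_star \<kappa> A B)"

text \<open>kappa^kappa, normalized to take the value kappa outside kappa.\<close>
definition kfuns :: "'k::wellorder \<Rightarrow> ('k \<Rightarrow> 'k) set" where
  "kfuns \<kappa> = {f. (\<forall>x<\<kappa>. f x < \<kappa>) \<and> (\<forall>x. \<kappa> \<le> x \<longrightarrow> f x = \<kappa>)}"

definition le_star :: "'k::wellorder \<Rightarrow> ('k \<Rightarrow> 'k) \<Rightarrow> ('k \<Rightarrow> 'k) \<Rightarrow> bool" where
  "le_star \<kappa> f g \<longleftrightarrow> (\<exists>\<beta><\<kappa>. \<forall>i. \<beta> \<le> i \<and> i < \<kappa> \<longrightarrow> f i \<le> g i)"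

text \<open>d_kappa is the least cardinality of a dominating family.\<close>
definition dominating :: "'k::wellorder \<Rightarrow> ('k \<Rightarrow> 'k) set \<Rightarrow> bool" where
  "dominating \<kappa> D \<longleftrightarrow> D \<subseteq> kfuns \<kappa> \<and> (\<forall>\<eta>\<in>kfuns \<kappa>. \<exists>\<nu>\<in>D. le_star \<kappa> \<eta> \<nu>)"

end

theory Submission
  imports Defs
begin

text \<open>For f in a dominating family, let A f consist of the isolated points of the set of
  Pr-cardinals that are closure points of f. A set without limit points in itself is nowhere
  stationary, and A f is unbounded because the Pr-cardinals are stationary. Suppose some nowhere
  stationary B almost contained every A f, and fix a club C disjoint from B. The function
  g sending x to an element of C above x is dominated beyond some \<beta> by some f in the family,
  so every closure point of f above \<beta> is a limit of C, hence lies in C and not in B. But A f has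
  such points above any bound for A f - B. Hence the sets A f form an unbounded family of size
  at most that of the dominating family.\<close>

lemma uncountable_cof_imp_is_limit:
  fixes \<delta> :: "'k::wellorder"
  assumes "uncountable_cof \<delta>"
  shows "is_limit \<delta>"
proof -
  have "\<exists>\<beta>. \<beta> < \<delta>"
    using assms[unfolded uncountable_cof_def, rule_format, of "{}"] by auto
  moreover have "\<exists>\<gamma>. \<beta> < \<gamma> \<and> \<gamma> < \<delta>" if "\<beta> < \<delta>" for \<beta>
    using assms[unfolded uncountable_cof_def, rule_format, of "{\<beta>}"] that by auto
  ultimately show ?thesis unfolding is_limit_def by auto
qed

lemma unbounded_in_strictly_above:
  fixes \<delta> :: "'k::wellorder"
  assumes "is_limit \<delta>" "unbounded_in \<delta> A" "x < \<delta>"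
  obtains a where "a \<in> A" "x < a"
proof -
  obtain z where "x < z" "z < \<delta>" using assms(1,3) unfolding is_limit_def by blast
  then obtain a where "a \<in> A" "z \<le> a" using assms(2) unfolding unbounded_in_def by blast
  with \<open>x < z\<close> show thesis using that by auto
qed

lemma club_final_segment:
  fixes \<delta> :: "'k::wellorder"
  assumes "y < \<delta>"
  shows "club_in \<delta> {x. y \<le> x \<and> x < \<delta>}"
  unfolding club_in_def unbounded_in_def
proof (intro conjI allI impI)
  fix b assume "b < \<delta>"
  then show "\<exists>a\<in>{x. y \<le> x \<and> x < \<delta>}. b \<le> a"
    using assms by (intro bexI[of _ "max b y"]) (auto simp: max_def)
next
  fix \<gamma> assume \<gamma>: "\<gamma> < \<delta>"
    "is_limit \<gamma> \<and> (\<forall>b<\<gamma>. \<exists>a\<in>{x. y \<le> x \<and> x < \<delta>} \<inter> {x. x < \<gamma>}. b \<le> a)"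
  then obtain z where "z < \<gamma>" unfolding is_limit_def by blast
  with \<gamma> obtain a where "y \<le> a" "a < \<gamma>" by blast
  with \<gamma> show "\<gamma> \<in> {x. y \<le> x \<and> x < \<delta>}" by auto
qed auto

lemma club_tail:
  fixes \<kappa> :: "'k::wellorder"
  assumes "club_in \<kappa> C" "is_limit \<kappa>" "\<beta> < \<kappa>"
  shows "club_in \<kappa> (C \<inter> {x. \<beta> < x})"
  unfolding club_in_def
proof (intro conjI allI impI)
  show "C \<inter> {x. \<beta> < x} \<subseteq> {x. x < \<kappa>}" using assms(1) unfolding club_in_def by auto
  show "unbounded_in \<kappa> (C \<inter> {x. \<beta> < x})" unfolding unbounded_in_def
  proof (intro allI impI)
    fix y assume "y < \<kappa>"
    with assms(3) have "max y \<beta> < \<kappa>" by simp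
    then obtain c where "c \<in> C" "max y \<beta> < c"
      using assms(1,2) unbounded_in_strictly_above unfolding club_in_def by blast
    then show "\<exists>a\<in>C \<inter> {x. \<beta> < x}. y \<le> a" by (intro bexI[of _ c]) auto
  qed
  fix \<gamma> assume \<gamma>: "\<gamma> < \<kappa>" "is_limit \<gamma> \<and> unbounded_in \<gamma> (C \<inter> {x. \<beta> < x} \<inter> {x. x < \<gamma>})"
  then have "unbounded_in \<gamma> (C \<inter> {x. x < \<gamma>})" unfolding unbounded_in_def by blast
  with \<gamma> assms(1) have "\<gamma> \<in> C" unfolding club_in_def by blast
  moreover obtain z where "z < \<gamma>" using \<gamma> unfolding is_limit_def by blast
  with \<gamma> obtain c where "\<beta> < c" "c < \<gamma>" unfolding unbounded_in_def by blast
  ultimately show "\<gamma> \<in> C \<inter> {x. \<beta> < x}" by auto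
qed

lemma stationary_meets_club_above:
  fixes \<kappa> :: "'k::wellorder"
  assumes "stationary_in \<kappa> S" "club_in \<kappa> C" "is_limit \<kappa>" "m < \<kappa>"
  obtains x where "x \<in> S" "x \<in> C" "m < x"
  using club_tail[OF assms(2-4)] assms(1) that unfolding stationary_in_def by blast

lemma uncountable_cof_iterates_sup:
  fixes \<delta> \<beta> :: "'k::wellorder"
  assumes "uncountable_cof \<delta>" "\<beta> < \<delta>" "\<forall>x<\<delta>. x < h x \<and> h x < \<delta>"
  obtains \<gamma> where "\<gamma> < \<delta>" "\<beta> < \<gamma>" "is_limit \<gamma>"
    "\<forall>x<\<gamma>. \<exists>n. x < (h^^n) \<beta>" "\<forall>n. (h^^n) \<beta> < \<gamma>"
proof -
  define a where "a n = (h^^n) \<beta>" for n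
  have a_below: "a n < \<delta>" for n
    by (induction n) (use assms in \<open>auto simp: a_def\<close>)
  have a_inc: "a n < a (Suc n)" for n
    using a_below[of n] assms(3) by (simp add: a_def)
  have "range a \<subseteq> {x. x < \<delta>}" using a_below by auto
  then obtain b where b: "b < \<delta>" "\<forall>n. a n < b"
    using assms(1)[unfolded uncountable_cof_def, rule_format, of "range a"] by auto
  define \<gamma> where "\<gamma> = (LEAST g. \<forall>n. a n < g)"
  have a_below_\<gamma>: "\<forall>n. a n < \<gamma>"
    unfolding \<gamma>_def by (rule LeastI[of _ b]) (use b in auto)
  have "\<gamma> \<le> b" unfolding \<gamma>_def by (rule Least_le) (use b in auto)
  have cofinal: "\<exists>n. x < a n" if "x < \<gamma>" for x
  proof (rule ccontr)
    assume "\<not> ?thesis"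
    then have "a n \<le> x" for n by (meson not_le)
    then have "a n < x" for n using a_inc[of n] by (meson order.strict_trans2)
    then have "\<gamma> \<le> x" unfolding \<gamma>_def by (intro Least_le) auto
    with that show False by auto
  qed
  have "is_limit \<gamma>"
    unfolding is_limit_def using a_below_\<gamma> cofinal by (meson order.strict_trans)
  moreover have "\<beta> < \<gamma>" using a_below_\<gamma>[rule_format, of 0] by (simp add: a_def)
  moreover have "\<gamma> < \<delta>" using \<open>\<gamma> \<le> b\<close> b(1) by simp
  ultimately show thesis using that a_below_\<gamma> cofinal unfolding a_def by blast
qed

lemma strongly_inaccessible_imp_uncountable_cof:
  fixes \<kappa> :: "'k::wellorder"
  assumes "strongly_inaccessible \<kappa>"
  shows "uncountable_cof \<kappa>"
  unfolding uncountable_cof_def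
proof (intro allI impI)
  fix A assume A: "A \<subseteq> {x. x < \<kappa>}" "countable A"
  show "\<exists>\<beta><\<kappa>. \<forall>a\<in>A. a < \<beta>"
  proof (rule ccontr)
    assume "\<not> ?thesis"
    then have "unbounded_in \<kappa> A" unfolding unbounded_in_def by (meson not_le)
    with assms A have "(card_of A, card_of {x. x < \<kappa>}) \<in> ordIso"
      unfolding strongly_inaccessible_def by blast
    then obtain g where "bij_betw g A {x. x < \<kappa>}" using card_of_ordIso by blast
    with A(2) have "countable {x. x < \<kappa>}" by (metis bij_betw_imp_surj_on countable_image)
    with assms show False unfolding strongly_inaccessible_def by blast
  qed
qed

lemma strongly_inaccessible_imp_is_limit:
  fixes \<kappa> :: "'k::wellorder"
  assumes "strongly_inaccessible \<kappa>"
  shows "is_limit \<kappa>"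
  using assms strongly_inaccessible_imp_uncountable_cof uncountable_cof_imp_is_limit by blast

lemma strongly_inaccessible_small_set_bounded:
  fixes \<kappa> :: "'k::wellorder"
  assumes "strongly_inaccessible \<kappa>" "A \<subseteq> {x. x < \<kappa>}"
    "(card_of A, card_of {x. x < \<kappa>}) \<in> ordLess"
  shows "\<exists>b<\<kappa>. \<forall>a\<in>A. a < b"
proof (rule ccontr)
  assume "\<not> ?thesis"
  then have "unbounded_in \<kappa> A" unfolding unbounded_in_def by (meson not_le)
  with assms(1,2) have "(card_of A, card_of {x. x < \<kappa>}) \<in> ordIso"
    unfolding strongly_inaccessible_def by blast
  with assms(3) show False using not_ordLess_ordIso by blast
qed

lemma strongly_inaccessible_bound_initial_values:
  fixes \<kappa> :: "'k::wellorder"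
  assumes inac: "strongly_inaccessible \<kappa>" and f: "f \<in> kfuns \<kappa>" and "x < \<kappa>"
  shows "\<exists>b<\<kappa>. x < b \<and> (\<forall>y\<le>x. f y < b)"
proof -
  obtain z where z: "x < z" "z < \<kappa>"
    using strongly_inaccessible_imp_is_limit[OF inac] \<open>x < \<kappa>\<close> unfolding is_limit_def by blast
  have "f ` {y. y < z} \<subseteq> {x. x < \<kappa>}" using f z unfolding kfuns_def by auto
  moreover have "(card_of {y. y < z}, card_of {x. x < \<kappa>}) \<in> ordLess"
    using inac z unfolding strongly_inaccessible_def by blast
  then have "(card_of (f ` {y. y < z}), card_of {x. x < \<kappa>}) \<in> ordLess"
    using card_of_image ordLeq_ordLess_trans by blast
  ultimately have "\<exists>b<\<kappa>. \<forall>a\<in>f ` {y. y < z}. a < b"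
    by (rule strongly_inaccessible_small_set_bounded[OF inac])
  then obtain b where b: "b < \<kappa>" "\<forall>a\<in>f ` {y. y < z}. a < b" by blast
  have "\<forall>y\<le>x. f y < max b z" using b(2) z(1) by (auto simp: less_max_iff_disj)
  with b(1) z show ?thesis by (intro exI[of _ "max b z"]) (auto simp: less_max_iff_disj)
qed

section \<open>Closure points and limit points\<close>

definition closure_points :: "'k::wellorder \<Rightarrow> ('k \<Rightarrow> 'k) \<Rightarrow> 'k set" where
  "closure_points \<delta> f = {\<gamma>. \<gamma> < \<delta> \<and> is_limit \<gamma> \<and> (\<forall>x<\<gamma>. f x < \<gamma>)}"

definition limit_points :: "'k::wellorder \<Rightarrow> 'k set \<Rightarrow> 'k set" where
  "limit_points \<delta> A = {\<gamma>. \<gamma> < \<delta> \<and> is_limit \<gamma> \<and> unbounded_in \<gamma> (A \<inter> {x. x < \<gamma>})}"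

lemma closure_points_closed:
  fixes \<gamma> :: "'k::wellorder"
  assumes "\<gamma> < \<delta>" "is_limit \<gamma>" "unbounded_in \<gamma> (closure_points \<delta> f \<inter> {x. x < \<gamma>})"
  shows "\<gamma> \<in> closure_points \<delta> f"
proof -
  have "f x < \<gamma>" if "x < \<gamma>" for x
  proof -
    obtain c where "c \<in> closure_points \<delta> f" "c < \<gamma>" "x < c"
      using unbounded_in_strictly_above[OF assms(2,3) \<open>x < \<gamma>\<close>] by blast
    then show ?thesis unfolding closure_points_def by auto
  qed
  with assms show ?thesis unfolding closure_points_def by auto
qed

lemma limit_points_closed:
  fixes \<gamma> :: "'k::wellorder"
  assumes "\<gamma> < \<delta>" "is_limit \<gamma>" "unbounded_in \<gamma> (limit_points \<delta> A \<inter> {x. x < \<gamma>})"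
  shows "\<gamma> \<in> limit_points \<delta> A"
proof -
  have "unbounded_in \<gamma> (A \<inter> {x. x < \<gamma>})" unfolding unbounded_in_def
  proof (intro allI impI)
    fix y assume "y < \<gamma>"
    then obtain c where "c \<in> limit_points \<delta> A" "c < \<gamma>" "y < c"
      using unbounded_in_strictly_above[OF assms(2,3)] by blast
    then obtain a where "a \<in> A" "a < c" "y \<le> a" unfolding limit_points_def unbounded_in_def by blast
    with \<open>c < \<gamma>\<close> show "\<exists>a\<in>A \<inter> {x. x < \<gamma>}. y \<le> a" by auto
  qed
  with assms show ?thesis unfolding limit_points_def by auto
qed

lemma club_closure_points:
  fixes \<kappa> :: "'k::wellorder"
  assumes inac: "strongly_inaccessible \<kappa>" and f: "f \<in> kfuns \<kappa>"
  shows "club_in \<kappa> (closure_points \<kappa> f)"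
proof -
  have uc: "uncountable_cof \<kappa>" using inac by (rule strongly_inaccessible_imp_uncountable_cof)
  have "\<forall>x. \<exists>b. x < \<kappa> \<longrightarrow> b < \<kappa> \<and> x < b \<and> (\<forall>y\<le>x. f y < b)"
    using strongly_inaccessible_bound_initial_values[OF inac f] by blast
  from choice[OF this] obtain h
    where h: "\<forall>x<\<kappa>. h x < \<kappa> \<and> x < h x \<and> (\<forall>y\<le>x. f y < h x)" by blast
  have "unbounded_in \<kappa> (closure_points \<kappa> f)" unfolding unbounded_in_def
  proof (intro allI impI)
    fix \<beta> assume "\<beta> < \<kappa>"
    have "\<forall>x<\<kappa>. x < h x \<and> h x < \<kappa>" using h by blast
    then obtain \<gamma> where \<gamma>: "\<gamma> < \<kappa>" "\<beta> < \<gamma>" "is_limit \<gamma>"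
      "\<forall>x<\<gamma>. \<exists>n. x < (h^^n) \<beta>" "\<forall>n. (h^^n) \<beta> < \<gamma>"
      by (rule uncountable_cof_iterates_sup[OF uc \<open>\<beta> < \<kappa>\<close>])
    have "f x < \<gamma>" if "x < \<gamma>" for x
    proof -
      obtain n where "x < (h^^n) \<beta>" using \<gamma>(4) \<open>x < \<gamma>\<close> by blast
      moreover have "(h^^n) \<beta> < \<kappa>" using \<gamma>(1,5) by (meson order.strict_trans)
      ultimately have "f x < h ((h^^n) \<beta>)" using h less_imp_le by blast
      then have "f x < (h^^Suc n) \<beta>" by simp
      then show ?thesis using \<gamma>(5) by (meson order.strict_trans)
    qed
    with \<gamma> have "\<gamma> \<in> closure_points \<kappa> f" unfolding closure_points_def by auto
    with \<gamma>(2) show "\<exists>a\<in>closure_points \<kappa> f. \<beta> \<le> a" using less_imp_le by blast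
  qed
  moreover have "closure_points \<kappa> f \<subseteq> {x. x < \<kappa>}" unfolding closure_points_def by auto
  ultimately show ?thesis unfolding club_in_def using closure_points_closed by blast
qed

lemma club_limit_points:
  fixes \<delta> :: "'k::wellorder"
  assumes uc: "uncountable_cof \<delta>" and A: "unbounded_in \<delta> (A \<inter> {x. x < \<delta>})"
  shows "club_in \<delta> (limit_points \<delta> A)"
proof -
  have "\<exists>a. a \<in> A \<and> x < a \<and> a < \<delta>" if "x < \<delta>" for x
    using unbounded_in_strictly_above[OF uncountable_cof_imp_is_limit[OF uc] A that] by blast
  then have "\<forall>x. \<exists>a. x < \<delta> \<longrightarrow> a \<in> A \<and> x < a \<and> a < \<delta>" by blast
  from choice[OF this] obtain h where h: "\<forall>x<\<delta>. h x \<in> A \<and> x < h x \<and> h x < \<delta>" by blast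
  have "unbounded_in \<delta> (limit_points \<delta> A)" unfolding unbounded_in_def
  proof (intro allI impI)
    fix \<beta> assume "\<beta> < \<delta>"
    have "\<forall>x<\<delta>. x < h x \<and> h x < \<delta>" using h by blast
    then obtain \<gamma> where \<gamma>: "\<gamma> < \<delta>" "\<beta> < \<gamma>" "is_limit \<gamma>"
      "\<forall>x<\<gamma>. \<exists>n. x < (h^^n) \<beta>" "\<forall>n. (h^^n) \<beta> < \<gamma>"
      by (rule uncountable_cof_iterates_sup[OF uc \<open>\<beta> < \<delta>\<close>])
    have "\<exists>a\<in>A \<inter> {x. x < \<gamma>}. x \<le> a" if "x < \<gamma>" for x
    proof -
      obtain n where "x < (h^^n) \<beta>" using \<gamma>(4) \<open>x < \<gamma>\<close> by blast
      moreover have "(h^^n) \<beta> < \<delta>" using \<gamma>(1,5) by (meson order.strict_trans)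
      moreover have "(h^^Suc n) \<beta> < \<gamma>" using \<gamma>(5) by blast
      ultimately show ?thesis using h by (intro bexI[of _ "(h^^Suc n) \<beta>"]) auto
    qed
    with \<gamma> have "\<gamma> \<in> limit_points \<delta> A" unfolding limit_points_def unbounded_in_def by auto
    with \<gamma>(2) show "\<exists>a\<in>limit_points \<delta> A. \<beta> \<le> a" using less_imp_le by blast
  qed
  moreover have "limit_points \<delta> A \<subseteq> {x. x < \<delta>}" unfolding limit_points_def by auto
  ultimately show ?thesis unfolding club_in_def using limit_points_closed by blast
qed

definition isolated_points :: "'k::wellorder set \<Rightarrow> 'k set" where
  "isolated_points A = {\<delta> \<in> A. \<exists>b<\<delta>. \<forall>a\<in>A. a < \<delta> \<longrightarrow> a \<le> b}"

lemma isolated_points_idem: "isolated_points (isolated_points A) = isolated_points A"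
  unfolding isolated_points_def by blast

lemma isolated_points_disjoint_limit_points: "isolated_points A \<inter> limit_points \<delta> A = {}"
proof (rule ccontr)
  assume "isolated_points A \<inter> limit_points \<delta> A \<noteq> {}"
  then obtain \<gamma> b where \<gamma>: "\<gamma> \<in> limit_points \<delta> A" "b < \<gamma>" "\<forall>a\<in>A. a < \<gamma> \<longrightarrow> a \<le> b"
    unfolding isolated_points_def by blast
  then have "is_limit \<gamma>" "unbounded_in \<gamma> (A \<inter> {x. x < \<gamma>})" unfolding limit_points_def by auto
  then obtain a where "a \<in> A" "a < \<gamma>" "b < a" using unbounded_in_strictly_above \<gamma>(2) by blast
  with \<gamma>(3) show False by fastforce
qed

lemma nowhere_stationary_isolated_points:
  fixes \<kappa> :: "'k::wellorder"
  assumes "A \<subseteq> {x. x < \<kappa>}"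
  shows "nowhere_stationary \<kappa> (isolated_points A)"
proof -
  let ?S = "isolated_points A"
  have "\<not> stationary_in \<delta> (?S \<inter> {x. x < \<delta>})" if uc: "uncountable_cof \<delta>" for \<delta>
  proof (cases "unbounded_in \<delta> (?S \<inter> {x. x < \<delta>})")
    case True
    with uc have "club_in \<delta> (limit_points \<delta> ?S)" by (rule club_limit_points)
    moreover have "?S \<inter> limit_points \<delta> ?S = {}"
      using isolated_points_disjoint_limit_points[of ?S] by (simp add: isolated_points_idem)
    ultimately show ?thesis unfolding stationary_in_def by blast
  next
    case False
    then obtain y where y: "y < \<delta>" "\<forall>a\<in>?S \<inter> {x. x < \<delta>}. a < y"
      unfolding unbounded_in_def by (meson not_le)
    then have "?S \<inter> {x. x < \<delta>} \<inter> {x. y \<le> x \<and> x < \<delta>} = {}" using leD by blast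
    with club_final_segment[OF y(1)] show ?thesis unfolding stationary_in_def by blast
  qed
  moreover have "?S \<subseteq> {x. x < \<kappa>}" using assms unfolding isolated_points_def by blast
  ultimately show ?thesis unfolding nowhere_stationary_def by blast
qed

lemma isolated_points_above:
  fixes m :: "'k::wellorder"
  assumes "x \<in> A" "m < x"
  obtains \<delta> where "\<delta> \<in> isolated_points A" "m < \<delta>"
proof -
  define \<delta> where "\<delta> = (LEAST x. x \<in> A \<and> m < x)"
  have \<delta>: "\<delta> \<in> A" "m < \<delta>" unfolding \<delta>_def by (rule LeastI2[of _ x], use assms in auto)+
  have "a \<le> m" if "a \<in> A" "a < \<delta>" for a
    using that not_less_Least[of a "\<lambda>x. x \<in> A \<and> m < x"] unfolding \<delta>_def[symmetric] by (meson not_le)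
  with \<delta> have "\<delta> \<in> isolated_points A" unfolding isolated_points_def by blast
  with \<delta>(2) show thesis using that by blast
qed

section \<open>An unbounded subfamily of nst^pr indexed by a dominating family\<close>

lemma nst_pr_not_stationary:
  fixes \<kappa> :: "'k::wellorder"
  assumes "strongly_inaccessible \<kappa>" "B \<in> nst_pr \<kappa>"
  shows "\<not> stationary_in \<kappa> B"
proof -
  have "uncountable_cof \<kappa>" using assms(1) by (rule strongly_inaccessible_imp_uncountable_cof)
  with assms(2) have "\<not> stationary_in \<kappa> (B \<inter> {x. x < \<kappa>})"
    unfolding nst_pr_def nowhere_stationary_def by blast
  moreover have "B \<inter> {x. x < \<kappa>} = B" using assms(2) unfolding nst_pr_def nowhere_stationary_def by blast
  ultimately show ?thesis by simp
qed

lemma club_successor_function: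
  fixes \<kappa> :: "'k::wellorder"
  assumes "is_limit \<kappa>" "club_in \<kappa> C"
  obtains g where "g \<in> kfuns \<kappa>" "\<forall>x<\<kappa>. x < g x \<and> g x \<in> C"
proof -
  have C: "unbounded_in \<kappa> C" "C \<subseteq> {x. x < \<kappa>}" using assms(2) unfolding club_in_def by auto
  have "\<forall>x. \<exists>c. x < \<kappa> \<longrightarrow> x < c \<and> c \<in> C"
    using unbounded_in_strictly_above[OF assms(1) C(1)] by metis
  from choice[OF this] obtain g0 where g0: "\<forall>x<\<kappa>. x < g0 x \<and> g0 x \<in> C" by blast
  define g where "g x = (if x < \<kappa> then g0 x else \<kappa>)" for x
  have "g \<in> kfuns \<kappa>" unfolding kfuns_def g_def using g0 C(2) by (auto simp: not_less)
  moreover have "\<forall>x<\<kappa>. x < g x \<and> g x \<in> C" unfolding g_def using g0 by simp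
  ultimately show thesis by (rule that)
qed

text \<open>A closure point of f above the point \<beta> from which f dominates g is also closed under g,
  and g jumps into C, so C is unbounded in it.\<close>
lemma closure_point_in_club:
  fixes \<kappa> :: "'k::wellorder"
  assumes C: "club_in \<kappa> C" and g: "\<forall>x<\<kappa>. x < g x \<and> g x \<in> C"
    and \<delta>: "\<delta> \<in> closure_points \<kappa> f" "\<beta> < \<delta>" and dom: "\<forall>i. \<beta> \<le> i \<and> i < \<kappa> \<longrightarrow> g i \<le> f i"
  shows "\<delta> \<in> C"
proof -
  have \<delta>\<kappa>: "\<delta> < \<kappa>" "is_limit \<delta>" "\<forall>x<\<delta>. f x < \<delta>" using \<delta>(1) unfolding closure_points_def by auto
  have "unbounded_in \<delta> (C \<inter> {x. x < \<delta>})" unfolding unbounded_in_def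
  proof (intro allI impI)
    fix y assume "y < \<delta>"
    define y' where "y' = max y \<beta>"
    have "y' < \<delta>" "\<beta> \<le> y'" "y \<le> y'" using \<open>y < \<delta>\<close> \<delta>(2) unfolding y'_def by auto
    moreover from this \<delta>\<kappa>(1) have "y' < \<kappa>" by simp
    ultimately have "g y' \<le> f y'" "f y' < \<delta>" "y' < g y'" "g y' \<in> C"
      using dom g \<delta>\<kappa>(3) by auto
    with \<open>y \<le> y'\<close> show "\<exists>a\<in>C \<inter> {x. x < \<delta>}. y \<le> a"
      by (intro bexI[of _ "g y'"]) auto
  qed
  with C \<delta>\<kappa> show ?thesis unfolding club_in_def by blast
qed

definition isolated_pr_closure_points :: "'k::wellorder \<Rightarrow> ('k \<Rightarrow> 'k) \<Rightarrow> 'k set" where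
  "isolated_pr_closure_points \<kappa> f = isolated_points (S_pr \<kappa> \<inter> closure_points \<kappa> f)"

lemma isolated_pr_closure_points_in_nst_pr: "isolated_pr_closure_points \<kappa> f \<in> nst_pr \<kappa>"
proof -
  have "S_pr \<kappa> \<inter> closure_points \<kappa> f \<subseteq> {x. x < \<kappa>}" unfolding closure_points_def by auto
  then have "nowhere_stationary \<kappa> (isolated_pr_closure_points \<kappa> f)"
    unfolding isolated_pr_closure_points_def by (rule nowhere_stationary_isolated_points)
  moreover have "isolated_pr_closure_points \<kappa> f \<subseteq> S_pr \<kappa>"
    unfolding isolated_pr_closure_points_def isolated_points_def by blast
  ultimately show ?thesis unfolding nst_pr_def by blast
qed

lemma isolated_pr_closure_points_unbounded:
  fixes \<kappa> :: "'k::wellorder"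
  assumes inac: "strongly_inaccessible \<kappa>" and st: "stationary_in \<kappa> (S_pr \<kappa>)"
    and f: "f \<in> kfuns \<kappa>" and "m < \<kappa>"
  obtains \<delta> where "\<delta> \<in> isolated_pr_closure_points \<kappa> f" "m < \<delta>"
proof -
  have "is_limit \<kappa>" using inac by (rule strongly_inaccessible_imp_is_limit)
  then obtain x where "x \<in> S_pr \<kappa>" "x \<in> closure_points \<kappa> f" "m < x"
    by (rule stationary_meets_club_above[OF st club_closure_points[OF inac f] _ \<open>m < \<kappa>\<close>])
  then have "x \<in> S_pr \<kappa> \<inter> closure_points \<kappa> f" "m < x" by auto
  then obtain \<delta> where "\<delta> \<in> isolated_points (S_pr \<kappa> \<inter> closure_points \<kappa> f)" "m < \<delta>"
    by (rule isolated_points_above)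
  then show thesis using that unfolding isolated_pr_closure_points_def by blast
qed

lemma dominating_escapes_nonstationary:
  fixes \<kappa> :: "'k::wellorder"
  assumes inac: "strongly_inaccessible \<kappa>" and st: "stationary_in \<kappa> (S_pr \<kappa>)"
    and D: "dominating \<kappa> D" and B: "\<not> stationary_in \<kappa> B"
  shows "\<exists>f\<in>D. \<not> subset_star \<kappa> (isolated_pr_closure_points \<kappa> f) B"
proof -
  have lim: "is_limit \<kappa>" using inac by (rule strongly_inaccessible_imp_is_limit)
  obtain C where C: "club_in \<kappa> C" "B \<inter> C = {}" using B unfolding stationary_in_def by blast
  obtain g where g: "g \<in> kfuns \<kappa>" "\<forall>x<\<kappa>. x < g x \<and> g x \<in> C"
    using club_successor_function[OF lim C(1)] by blast
  obtain f where f: "f \<in> D" "f \<in> kfuns \<kappa>" "le_star \<kappa> g f"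
    using D g(1) unfolding dominating_def by blast
  then obtain \<beta> where \<beta>: "\<beta> < \<kappa>" "\<forall>i. \<beta> \<le> i \<and> i < \<kappa> \<longrightarrow> g i \<le> f i"
    unfolding le_star_def by blast
  have "\<not> subset_star \<kappa> (isolated_pr_closure_points \<kappa> f) B"
  proof
    assume "subset_star \<kappa> (isolated_pr_closure_points \<kappa> f) B"
    then obtain \<beta>' where \<beta>': "\<beta>' < \<kappa>" "\<forall>x\<in>isolated_pr_closure_points \<kappa> f - B. x < \<beta>'"
      unfolding subset_star_def by blast
    have "max \<beta> \<beta>' < \<kappa>" using \<beta>(1) \<beta>'(1) by simp
    then obtain \<delta> where \<delta>: "\<delta> \<in> isolated_pr_closure_points \<kappa> f" "max \<beta> \<beta>' < \<delta>"
      by (rule isolated_pr_closure_points_unbounded[OF inac st f(2)])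
    have "\<delta> \<in> closure_points \<kappa> f"
      using \<delta>(1) unfolding isolated_pr_closure_points_def isolated_points_def by blast
    moreover have "\<beta> < \<delta>" "\<beta>' < \<delta>" using \<delta>(2) by auto
    ultimately have "\<delta> \<in> C" using closure_point_in_club[OF C(1) g(2) _ _ \<beta>(2)] by blast
    with C(2) \<beta>'(2) \<delta>(1) have "\<delta> < \<beta>'" by blast
    with \<open>\<beta>' < \<delta>\<close> show False by simp
  qed
  with f(1) show ?thesis by blast
qed

theorem theorem5p11:
  fixes \<kappa> :: "'k::wellorder"
  assumes "strongly_inaccessible \<kappa>"
    and "stationary_in \<kappa> (S_pr \<kappa>)"
  shows "\<forall>D. dominating \<kappa> D \<longrightarrow>
           (\<exists>F. unbounded_family \<kappa> F \<and> (card_of F, card_of D) \<in> ordLeq)"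
proof (intro allI impI)
  fix D assume D: "dominating \<kappa> D"
  define F where "F = isolated_pr_closure_points \<kappa> ` D"
  have "F \<subseteq> nst_pr \<kappa>" unfolding F_def using isolated_pr_closure_points_in_nst_pr by blast
  moreover have "\<not> (\<exists>B\<in>nst_pr \<kappa>. \<forall>A\<in>F. subset_star \<kappa> A B)"
  proof
    assume "\<exists>B\<in>nst_pr \<kappa>. \<forall>A\<in>F. subset_star \<kappa> A B"
    then obtain B where B: "B \<in> nst_pr \<kappa>"
      "\<forall>f\<in>D. subset_star \<kappa> (isolated_pr_closure_points \<kappa> f) B"
      unfolding F_def by blast
    with dominating_escapes_nonstationary[OF assms D nst_pr_not_stationary[OF assms(1) B(1)]]
    show False by blast
  qed
  ultimately have "unbounded_family \<kappa> F" unfolding unbounded_family_def by blast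
  moreover have "(card_of F, card_of D) \<in> ordLeq" unfolding F_def by (rule card_of_image)
  ultimately show "\<exists>F. unbounded_family \<kappa> F \<and> (card_of F, card_of D) \<in> ordLeq" by blast
qed

end
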